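(* Let $c,d\in(0,1]$, let $B=B(c,d)$, and define $h(x)=\dfrac{xF(c,d;c+d;x)}{\log(1/(1-x))}$ for $x\in(0,1)$. Let $p\ge1$. Then for all $x\in(0,1)$, with $z=1-(1-x)^{1/p}$, $$B\ge B\,h(z)\ge B\,h(x)\ge 1\qquad\text{and}\qquad F(c,d;c+d;z)\ge \tfrac1p F(c,d;c+d;x).$$ When $c=d=1$ one has $B=1$ and $h\equiv1$, so the first chain consists of equalities.
   Context: $F(a,b;c;x)$ is the Gaussian hypergeometric function $\sum_{n\ge0}\frac{(a)_n(b)_n}{(c)_n}\frac{x^n}{n!}$ ($|x|<1$), with $(a)_n=a(a+1)\cdots(a+n-1)$, $(a)_0=1$. $B(c,d)=\Gamma(c)\Gamma(d)/\Gamma(c+d)$ is the beta function. *)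

theory Defs
  imports "HOL-Analysis.Analysis"
begin

definition hyp2F1 :: "real \<Rightarrow> real \<Rightarrow> real \<Rightarrow> real \<Rightarrow> real" where
  "hyp2F1 a b c x = (\<Sum>n. pochhammer a n * pochhammer b n / pochhammer c n * x ^ n / fact n)"

definition Beta_fn :: "real \<Rightarrow> real \<Rightarrow> real" where
  "Beta_fn c d = Gamma c * Gamma d / Gamma (c + d)"

definition h_fn :: "real \<Rightarrow> real \<Rightarrow> real \<Rightarrow> real" where
  "h_fn c d x = x * hyp2F1 c d (c + d) x / ln (1 / (1 - x))"

end

theory Submission imports Defs begin

(* Write a_n = (c)_n (d)_n / ((c+d)_n n!), so that F(c,d;c+d;t) = sum a_n t^n and
   t F(t) = sum a_n t^(n+1), while log(1/(1-t)) = sum t^(n+1)/(n+1).  Everything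
   rests on the sequence (n+1) a_n: for c,d in (0,1] it is decreasing (from the
   recurrence for a_n), starts at 1 and tends to 1/B(c,d) (Gauss' product for Gamma).
   Hence 1/(B (n+1)) <= a_n <= 1/(n+1) termwise, which gives 1 <= B h(t) <= B.
   Moreover the coefficient ratio a_n / (1/(n+1)) is decreasing, and a discrete
   version of the monotone ratio rule for power series (proved by a symmetrised
   Cauchy product) shows that h is decreasing on (0,1).  Since z <= x this yields
   h(z) >= h(x); and log(1/(1-z)) = log(1/(1-x))/p turns this into
   z F(z) >= x F(x)/p, which implies F(z) >= F(x)/p because z <= x. *)

definition hyp_coeff :: "real \<Rightarrow> real \<Rightarrow> nat \<Rightarrow> real" where
  "hyp_coeff c d n = pochhammer c n * pochhammer d n / pochhammer (c + d) n / fact n"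

lemma hyp_coeff_pos: "0 < c \<Longrightarrow> 0 < d \<Longrightarrow> 0 < hyp_coeff c d n"
  unfolding hyp_coeff_def by (intro divide_pos_pos mult_pos_pos pochhammer_pos) auto

lemma hyp_coeff_Suc:
  assumes "0 < c" "0 < d"
  shows "hyp_coeff c d (Suc n) = hyp_coeff c d n * ((c + n) * (d + n)) / ((c + d + n) * (n + 1))"
proof -
  have "pochhammer (c + d) n > 0" "c + d + n > 0" using assms by (auto intro: pochhammer_pos)
  then show ?thesis unfolding hyp_coeff_def by (simp add: pochhammer_Suc field_simps)
qed

text \<open>For \<open>c, d \<le> 1\<close> the weighted coefficients \<open>(n+1) a_n\<close> decrease; the step reduces
  to the polynomial inequality \<open>(n+2)(c+n)(d+n) \<le> (n+1)^2 (c+d+n)\<close>.\<close>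
lemma weighted_hyp_coeff_decseq:
  assumes c: "0 < c" "c \<le> 1" and d: "0 < d" "d \<le> 1"
  shows "decseq (\<lambda>n. (real n + 1) * hyp_coeff c d n)"
proof (rule decseq_SucI)
  fix n :: nat
  have "c * d \<le> 1" using c d by (simp add: mult_le_one)
  then have "0 \<le> (1 - c * d) * n" by (intro mult_nonneg_nonneg) auto
  moreover have "0 \<le> c * (1 - d) + d * (1 - c)" using c d by simp
  ultimately have poly: "(n + 2) * ((c + n) * (d + n)) \<le> (n + 1)^2 * (c + d + n)"
    by (simp add: power2_eq_square algebra_simps)
  have pos: "(c + d + n) * (n + 1) > 0" using c d by simp
  have "(real (Suc n) + 1) * hyp_coeff c d (Suc n)
      = hyp_coeff c d n * ((n + 2) * ((c + n) * (d + n))) / ((c + d + n) * (n + 1))"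
    using hyp_coeff_Suc[OF c(1) d(1)] by (simp add: field_simps)
  also have "\<dots> \<le> hyp_coeff c d n * ((n + 1)^2 * (c + d + n)) / ((c + d + n) * (n + 1))"
    using poly pos hyp_coeff_pos[OF c(1) d(1), of n]
    by (intro divide_right_mono mult_left_mono) auto
  also have "\<dots> = (real n + 1) * hyp_coeff c d n"
    using pos by (simp add: power2_eq_square field_simps)
  finally show "(real (Suc n) + 1) * hyp_coeff c d (Suc n) \<le> (real n + 1) * hyp_coeff c d n" .
qed

text \<open>The limit \<open>(n+1) a_n \<longrightarrow> 1/B(c,d)\<close>: up to the factor \<open>(n+1)/n\<close> the quantity
  \<open>(n+1) a_n\<close> is exactly a quotient of Gauss' finite Gamma products.\<close>
lemma weighted_hyp_coeff_limit:
  assumes c: "0 < c" and d: "0 < d"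
  shows "(\<lambda>n. (real n + 1) * hyp_coeff c d n) \<longlonglongrightarrow> 1 / Beta_fn c d"
proof -
  let ?G = "\<lambda>z n. Gamma_series' z n"
  have "Gamma c > 0" "Gamma d > 0" using c d by auto
  then have lim: "(\<lambda>n. ?G (c + d) n / (?G c n * ?G d n) * (of_nat (Suc n) / of_nat n))
      \<longlonglongrightarrow> Gamma (c + d) / (Gamma c * Gamma d) * 1"
    by (intro tendsto_intros Gamma_series'_LIMSEQ LIMSEQ_Suc_n_over_n) auto
  have "\<forall>\<^sub>F n in sequentially. ?G (c + d) n / (?G c n * ?G d n) * (of_nat (Suc n) / of_nat n)
          = (real n + 1) * hyp_coeff c d n"
    using eventually_gt_at_top[of 0]
  proof eventually_elim
    case (elim n)
    then obtain k where k: "n = Suc k" by (cases n) auto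
    have pos: "pochhammer c n > 0" "pochhammer d n > 0" "pochhammer (c + d) n > 0"
      using c d by (auto intro!: pochhammer_pos)
    have exp_split: "exp ((c + d) * ln (real (Suc k)))
        = exp (c * ln (real (Suc k))) * exp (d * ln (real (Suc k)))"
      by (simp add: distrib_right exp_add)
    have quotient: "\<And>E F P Q R f. E > 0 \<Longrightarrow> F > 0 \<Longrightarrow> P > 0 \<Longrightarrow> Q > 0 \<Longrightarrow> R > 0 \<Longrightarrow> f > 0 \<Longrightarrow>
        (f * (E * F) / R) / ((f * E / P) * (f * F / Q)) * (real (Suc (Suc k)) / real (Suc k))
        = (real (Suc k) + 1) * (P * Q / R / (real (Suc k) * f))"
      by (simp add: field_simps)
    show ?case
      unfolding Gamma_series'_def hyp_coeff_def k exp_split diff_Suc_1 of_real_eq_id id_def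
        fact_Suc of_nat_mult
      using pos unfolding k by (intro quotient) auto
  qed
  moreover have "Gamma (c + d) / (Gamma c * Gamma d) * 1 = 1 / Beta_fn c d"
    by (simp add: Beta_fn_def)
  ultimately show ?thesis using Lim_transform_eventually[OF lim] by simp
qed

text \<open>Termwise bounds \<open>1/B \<le> (n+1) a_n \<le> 1\<close>, from monotonicity, \<open>a_0 = 1\<close> and the limit.\<close>
lemma weighted_hyp_coeff_bounds:
  assumes c: "0 < c" "c \<le> 1" and d: "0 < d" "d \<le> 1"
  shows "(real n + 1) * hyp_coeff c d n \<le> 1"
    and "1 / Beta_fn c d \<le> (real n + 1) * hyp_coeff c d n"
proof -
  have "(real n + 1) * hyp_coeff c d n \<le> (real 0 + 1) * hyp_coeff c d 0"
    using decseqD[OF weighted_hyp_coeff_decseq[OF assms]] by blast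
  then show "(real n + 1) * hyp_coeff c d n \<le> 1" by (simp add: hyp_coeff_def)
  show "1 / Beta_fn c d \<le> (real n + 1) * hyp_coeff c d n"
    by (rule decseq_ge[OF weighted_hyp_coeff_decseq[OF assms] weighted_hyp_coeff_limit[OF c(1) d(1)]])
qed

lemma hyp2F1_shifted_sums:
  assumes c: "0 < c" "c \<le> 1" and d: "0 < d" "d \<le> 1" and t: "0 \<le> t" "t < 1"
  shows "(\<lambda>n. hyp_coeff c d n * t ^ Suc n) sums (t * hyp2F1 c d (c + d) t)"
proof -
  have "summable (\<lambda>n. hyp_coeff c d n * t ^ n)"
  proof (rule summable_comparison_test)
    show "summable (\<lambda>n. t ^ n)" using t by (intro summable_geometric) auto
    show "\<exists>N. \<forall>n\<ge>N. norm (hyp_coeff c d n * t ^ n) \<le> t ^ n"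
    proof (intro exI allI impI)
      fix n
      have "hyp_coeff c d n \<le> (real n + 1) * hyp_coeff c d n"
        using hyp_coeff_pos[OF c(1) d(1), of n] by (simp add: algebra_simps)
      then have "hyp_coeff c d n \<le> 1" using weighted_hyp_coeff_bounds(1)[OF c d, of n] by simp
      then show "norm (hyp_coeff c d n * t ^ n) \<le> t ^ n"
        using hyp_coeff_pos[OF c(1) d(1), of n] t by (simp add: abs_mult mult_left_le_one_le)
    qed
  qed
  moreover have "hyp2F1 c d (c + d) t = (\<Sum>n. hyp_coeff c d n * t ^ n)"
    unfolding hyp2F1_def hyp_coeff_def by (simp add: divide_inverse mult_ac)
  ultimately have "(\<lambda>n. t * (hyp_coeff c d n * t ^ n)) sums (t * hyp2F1 c d (c + d) t)"
    by (intro sums_mult) (simp add: summable_sums)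
  then show ?thesis by (simp add: algebra_simps)
qed

lemma ln_inverse_sums:
  fixes t :: real
  assumes "0 \<le> t" "t < 1"
  shows "(\<lambda>n. 1 / real (n + 1) * t ^ Suc n) sums ln (1 / (1 - t))"
proof -
  have "(\<lambda>n. - ((- (- t)) ^ n) / of_nat n) sums ln (1 + (- t))"
    using assms by (intro ln_series') auto
  then have "(\<lambda>n. - (t ^ Suc n) / real (Suc n)) sums ln (1 - t)"
    by (subst sums_Suc_iff) simp
  then have "(\<lambda>n. - (- (t ^ Suc n) / real (Suc n))) sums (- ln (1 - t))"
    by (rule sums_minus)
  moreover have "ln (1 / (1 - t)) = - ln (1 - t)" using assms by (simp add: ln_div)
  ultimately show ?thesis by simp
qed

lemma ln_inverse_pos:
  fixes t :: real
  assumes "0 < t" "t < 1"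
  shows "0 < ln (1 / (1 - t))"
proof -
  have "1 < 1 / (1 - t)" using assms by (simp add: field_simps)
  then show ?thesis by (rule ln_gt_zero)
qed

text \<open>Cross terms for the ratio rule: if \<open>\<alpha>_n/\<beta>_n\<close> decreases (in cross-multiplied form)
  and \<open>0 \<le> z \<le> x\<close>, the symmetric pair of terms in the product difference is nonnegative.\<close>
lemma ratio_cross_term_nonneg:
  fixes \<alpha> \<beta> :: "nat \<Rightarrow> real"
  assumes ratio: "\<And>n m. n \<le> m \<Longrightarrow> \<alpha> m * \<beta> n \<le> \<alpha> n * \<beta> m"
    and z: "0 \<le> z" "z \<le> x"
  shows "0 \<le> (\<alpha> n * \<beta> m - \<alpha> m * \<beta> n) * (z ^ Suc n * x ^ Suc m - x ^ Suc n * z ^ Suc m)"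
proof -
  have powers: "x ^ Suc i * z ^ Suc j \<le> z ^ Suc i * x ^ Suc j" if "i \<le> j" for i j
  proof -
    obtain k where k: "j = i + k" using \<open>i \<le> j\<close> le_Suc_ex by blast
    have "z ^ k \<le> x ^ k" using z by (intro power_mono) auto
    then have "z ^ Suc i * x ^ Suc i * z ^ k \<le> z ^ Suc i * x ^ Suc i * x ^ k"
      using z by (intro mult_left_mono) auto
    then show ?thesis unfolding k by (simp add: power_add algebra_simps)
  qed
  show ?thesis
  proof (cases "n \<le> m")
    case True
    then show ?thesis using ratio[OF True] powers[OF True] by (intro mult_nonneg_nonneg) auto
  next
    case False
    then have "m \<le> n" by simp
    then show ?thesis using ratio[OF \<open>m \<le> n\<close>] powers[OF \<open>m \<le> n\<close>]
      by (intro mult_nonpos_nonpos) (auto simp: mult_ac)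
  qed
qed

text \<open>The ratio rule for partial sums, by symmetrising the double sum of the product.\<close>
lemma ratio_rule_partial_sums:
  fixes \<alpha> \<beta> :: "nat \<Rightarrow> real"
  assumes ratio: "\<And>n m. n \<le> m \<Longrightarrow> \<alpha> m * \<beta> n \<le> \<alpha> n * \<beta> m"
    and z: "0 \<le> z" "z \<le> x"
  shows "(\<Sum>n<N. \<alpha> n * x ^ Suc n) * (\<Sum>m<N. \<beta> m * z ^ Suc m)
         \<le> (\<Sum>n<N. \<alpha> n * z ^ Suc n) * (\<Sum>m<N. \<beta> m * x ^ Suc m)"
proof -
  define T where "T n m = \<alpha> n * \<beta> m * (z ^ Suc n * x ^ Suc m - x ^ Suc n * z ^ Suc m)" for n m
  have difference: "(\<Sum>n<N. \<alpha> n * z ^ Suc n) * (\<Sum>m<N. \<beta> m * x ^ Suc m)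
      - (\<Sum>n<N. \<alpha> n * x ^ Suc n) * (\<Sum>m<N. \<beta> m * z ^ Suc m) = (\<Sum>n<N. \<Sum>m<N. T n m)"
    unfolding sum_product sum_subtractf[symmetric] T_def by (intro sum.cong refl) (simp add: algebra_simps)
  have "0 \<le> (\<Sum>n<N. \<Sum>m<N. T n m + T m n)"
  proof (intro sum_nonneg)
    fix n m
    have "T n m + T m n = (\<alpha> n * \<beta> m - \<alpha> m * \<beta> n) * (z ^ Suc n * x ^ Suc m - x ^ Suc n * z ^ Suc m)"
      by (simp add: T_def algebra_simps)
    then show "0 \<le> T n m + T m n" using ratio_cross_term_nonneg[OF ratio z] by simp
  qed
  also have "\<dots> = 2 * (\<Sum>n<N. \<Sum>m<N. T n m)"
    by (simp add: sum.distrib sum.swap[of T])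
  finally show ?thesis using difference by linarith
qed

lemma ratio_rule_series:
  fixes \<alpha> \<beta> :: "nat \<Rightarrow> real"
  assumes ratio: "\<And>n m. n \<le> m \<Longrightarrow> \<alpha> m * \<beta> n \<le> \<alpha> n * \<beta> m"
    and z: "0 \<le> z" "z \<le> x"
    and Ax: "(\<lambda>n. \<alpha> n * x ^ Suc n) sums Ax" and Az: "(\<lambda>n. \<alpha> n * z ^ Suc n) sums Az"
    and Bx: "(\<lambda>n. \<beta> n * x ^ Suc n) sums Bx" and Bz: "(\<lambda>n. \<beta> n * z ^ Suc n) sums Bz"
  shows "Ax * Bz \<le> Az * Bx"
proof (rule LIMSEQ_le)
  show "(\<lambda>N. (\<Sum>n<N. \<alpha> n * x ^ Suc n) * (\<Sum>m<N. \<beta> m * z ^ Suc m)) \<longlonglongrightarrow> Ax * Bz"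
    using Ax Bz by (intro tendsto_mult) (simp_all add: sums_def)
  show "(\<lambda>N. (\<Sum>n<N. \<alpha> n * z ^ Suc n) * (\<Sum>m<N. \<beta> m * x ^ Suc m)) \<longlonglongrightarrow> Az * Bx"
    using Az Bx by (intro tendsto_mult) (simp_all add: sums_def)
  show "\<exists>N. \<forall>n\<ge>N. (\<Sum>n<n. \<alpha> n * x ^ Suc n) * (\<Sum>m<n. \<beta> m * z ^ Suc m)
                  \<le> (\<Sum>n<n. \<alpha> n * z ^ Suc n) * (\<Sum>m<n. \<beta> m * x ^ Suc m)"
    using ratio_rule_partial_sums[of \<alpha> \<beta> z x] ratio z by blast
qed

text \<open>Upper bound: \<open>t F(t) \<le> log(1/(1-t))\<close>, i.e. \<open>h \<le> 1\<close>, termwise from \<open>a_n \<le> 1/(n+1)\<close>.\<close>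
lemma h_fn_le_one:
  assumes c: "0 < c" "c \<le> 1" and d: "0 < d" "d \<le> 1" and t: "0 < t" "t < 1"
  shows "h_fn c d t \<le> 1"
proof -
  have "t * hyp2F1 c d (c + d) t \<le> ln (1 / (1 - t))"
  proof (rule sums_le[OF _ hyp2F1_shifted_sums[OF c d] ln_inverse_sums])
    fix n
    have "hyp_coeff c d n \<le> 1 / real (n + 1)"
      using weighted_hyp_coeff_bounds(1)[OF c d, of n] by (simp add: field_simps)
    then show "hyp_coeff c d n * t ^ Suc n \<le> 1 / real (n + 1) * t ^ Suc n"
      using t by (intro mult_right_mono) auto
  qed (use t in auto)
  moreover have "ln (1 / (1 - t)) > 0" using ln_inverse_pos[OF t] .
  ultimately show ?thesis unfolding h_fn_def by simp
qed

text \<open>Lower bound: \<open>log(1/(1-t)) \<le> B t F(t)\<close>, i.e. \<open>B h \<ge> 1\<close>, from \<open>1/(n+1) \<le> B a_n\<close>.\<close>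
lemma Beta_h_fn_ge_one:
  assumes c: "0 < c" "c \<le> 1" and d: "0 < d" "d \<le> 1" and t: "0 < t" "t < 1"
  shows "1 \<le> Beta_fn c d * h_fn c d t"
proof -
  have B: "Beta_fn c d > 0" unfolding Beta_fn_def using c d by simp
  have "ln (1 / (1 - t)) \<le> Beta_fn c d * (t * hyp2F1 c d (c + d) t)"
  proof (rule sums_le[OF _ ln_inverse_sums sums_mult[OF hyp2F1_shifted_sums[OF c d]]])
    fix n
    have "1 / real (n + 1) \<le> Beta_fn c d * hyp_coeff c d n"
      using weighted_hyp_coeff_bounds(2)[OF c d, of n] B by (simp add: field_simps)
    then show "1 / real (n + 1) * t ^ Suc n \<le> Beta_fn c d * (hyp_coeff c d n * t ^ Suc n)"
      using t mult_right_mono[of "1 / real (n + 1)" "Beta_fn c d * hyp_coeff c d n" "t ^ Suc n"]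
      by (simp add: mult_ac)
  qed (use t in auto)
  moreover have "ln (1 / (1 - t)) > 0" using ln_inverse_pos[OF t] .
  ultimately show ?thesis unfolding h_fn_def by (simp add: le_divide_eq)
qed

text \<open>Monotonicity: \<open>h\<close> is decreasing on \<open>(0,1)\<close>, by the ratio rule applied to
  \<open>a_n\<close> and \<open>1/(n+1)\<close>, whose quotient \<open>(n+1) a_n\<close> decreases.\<close>
lemma h_fn_antimono:
  assumes c: "0 < c" "c \<le> 1" and d: "0 < d" "d \<le> 1" and zx: "0 < z" "z \<le> x" "x < 1"
  shows "h_fn c d x \<le> h_fn c d z"
proof -
  have ratio: "hyp_coeff c d m * (1 / real (n + 1)) \<le> hyp_coeff c d n * (1 / real (m + 1))"
    if "n \<le> m" for n m
  proof -
    have "(real m + 1) * hyp_coeff c d m \<le> (real n + 1) * hyp_coeff c d n"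
      using decseqD[OF weighted_hyp_coeff_decseq[OF c d] that] .
    then show ?thesis by (simp add: field_simps)
  qed
  have "x * hyp2F1 c d (c + d) x * ln (1 / (1 - z)) \<le> z * hyp2F1 c d (c + d) z * ln (1 / (1 - x))"
    using zx by (intro ratio_rule_series[OF ratio _ _ hyp2F1_shifted_sums[OF c d]
          hyp2F1_shifted_sums[OF c d] ln_inverse_sums ln_inverse_sums]) auto
  moreover have "ln (1 / (1 - x)) > 0" "ln (1 / (1 - z)) > 0"
    using zx by (auto intro: ln_inverse_pos)
  ultimately show ?thesis
    unfolding h_fn_def by (simp add: divide_le_eq le_divide_eq mult_ac)
qed

lemma root_substitution:
  fixes p x :: real
  assumes "1 \<le> p" "0 < x" "x < 1"
  defines "z \<equiv> 1 - (1 - x) powr (1 / p)"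
  shows "0 < z" "z \<le> x" "ln (1 / (1 - z)) = ln (1 / (1 - x)) / p"
proof -
  have p: "0 < 1 / p" "1 / p \<le> 1" using assms(1) by auto
  show "z \<le> x" unfolding z_def using powr_mono'[of "1 / p" 1 "1 - x"] p assms(2,3) by simp
  show "0 < z" unfolding z_def using powr_less_mono'[of "1 - x" 0 "1 / p"] p assms(2,3) by simp
  show "ln (1 / (1 - z)) = ln (1 / (1 - x)) / p"
    unfolding z_def using assms(2,3) by (simp add: ln_div ln_powr)
qed

lemma hyp2F1_bound_from_h_fn:
  assumes p: "1 \<le> p" and zx: "0 < z" "z \<le> x" "x < 1"
    and log_scaled: "ln (1 / (1 - z)) = ln (1 / (1 - x)) / p"
    and h_mono: "h_fn c d x \<le> h_fn c d z" and hz_pos: "0 < h_fn c d z"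
  shows "(1 / p) * hyp2F1 c d (c + d) x \<le> hyp2F1 c d (c + d) z"
proof -
  define Fx Fz L where "Fx = hyp2F1 c d (c + d) x" and "Fz = hyp2F1 c d (c + d) z"
    and "L = ln (1 / (1 - x))"
  have L: "L > 0" unfolding L_def using ln_inverse_pos zx by simp
  have hx: "h_fn c d x = x * Fx / L" and hz: "h_fn c d z = p * (z * Fz) / L"
    unfolding h_fn_def Fx_def Fz_def L_def log_scaled using p by simp_all
  have scaled: "x * Fx / p \<le> z * Fz"
    using h_mono L p unfolding hx hz by (simp add: divide_le_eq field_simps)
  have "0 \<le> Fz" using hz_pos L zx p unfolding hz by (simp add: zero_less_mult_iff zero_less_divide_iff)
  have "(1 / p) * Fx = (x * Fx / p) / x" using zx by simp
  also have "\<dots> \<le> (z * Fz) / x" using divide_right_mono[OF scaled, of x] zx by simp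
  also have "\<dots> \<le> (z * Fz) / z" using divide_left_mono[of z x "z * Fz"] \<open>0 \<le> Fz\<close> zx by simp
  also have "\<dots> = Fz" using zx by simp
  finally show ?thesis unfolding Fx_def Fz_def .
qed

theorem mainTheorem4:
  fixes c d p x :: real
  assumes "0 < c" "c \<le> 1" "0 < d" "d \<le> 1" "1 \<le> p" "0 < x" "x < 1"
  defines "z \<equiv> 1 - (1 - x) powr (1 / p)"
  shows "Beta_fn c d \<ge> Beta_fn c d * h_fn c d z
       \<and> Beta_fn c d * h_fn c d z \<ge> Beta_fn c d * h_fn c d x
       \<and> Beta_fn c d * h_fn c d x \<ge> 1
       \<and> hyp2F1 c d (c + d) z \<ge> (1 / p) * hyp2F1 c d (c + d) x"
proof -
  note c = assms(1,2) and d = assms(3,4) and x = assms(6,7)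
  have z: "0 < z" "z \<le> x" "ln (1 / (1 - z)) = ln (1 / (1 - x)) / p"
    using root_substitution[OF assms(5-7)] unfolding z_def by auto
  have B: "Beta_fn c d > 0" unfolding Beta_fn_def using c d by simp
  have hz_le: "h_fn c d z \<le> 1" using h_fn_le_one[OF c d] z x by simp
  have h_mono: "h_fn c d x \<le> h_fn c d z" using h_fn_antimono[OF c d] z x by simp
  have Bhx: "1 \<le> Beta_fn c d * h_fn c d x" using Beta_h_fn_ge_one[OF c d x] .
  have "0 < h_fn c d z" using Bhx B h_mono by (smt (verit) mult_nonneg_nonpos)
  then have "(1 / p) * hyp2F1 c d (c + d) x \<le> hyp2F1 c d (c + d) z"
    using hyp2F1_bound_from_h_fn[OF assms(5) z(1,2) x(2) z(3) h_mono] by blast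
  then show ?thesis using hz_le h_mono Bhx B by (simp add: mult_left_mono)
qed

end
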